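(* Let $\Sigma$ be a $\delta$-set and let $s=\max\Sigma$. Then $|\Sigma|\ge\lceil (s+1)/2\rceil$.
   Context: All graphs are finite and simple; $d(u,v)$ denotes the usual graph distance (infinite between different components). For a set $J$ of nonnegative integers, a distance $J$-labeling of $G$ is a function $f:V(G)\to J$ with $f(V(G))=J$ such that whenever two distinct vertices $u,v$ satisfy $f(u)=f(v)=k$, we have $d(u,v)=k$. It is proper if every $k\in J\setminus\{0\}$ is the label of at least two vertices. A finite nonempty set $\Sigma$ of nonnegative integers is a $\delta$-set if there exists a graph admitting a proper distance $\Sigma$-labeling. *)

theory Defs
  imports Complex_Main "HOL-Library.Extended_Nat"
begin

definition simple_graph :: "'a set \<Rightarrow> ('a \<Rightarrow> 'a \<Rightarrow> bool) \<Rightarrow> bool" where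
  "simple_graph V E \<longleftrightarrow> finite V \<and> (\<forall>u v. E u v \<longrightarrow> u \<in> V \<and> v \<in> V)
     \<and> (\<forall>u v. E u v \<longrightarrow> E v u) \<and> (\<forall>u. \<not> E u u)"

fun walk :: "('a \<Rightarrow> 'a \<Rightarrow> bool) \<Rightarrow> nat \<Rightarrow> 'a \<Rightarrow> 'a \<Rightarrow> bool" where
  "walk E 0 u v = (u = v)"
| "walk E (Suc n) u v = (\<exists>w. E u w \<and> walk E n w v)"

definition gdist :: "('a \<Rightarrow> 'a \<Rightarrow> bool) \<Rightarrow> 'a \<Rightarrow> 'a \<Rightarrow> enat" where
  "gdist E u v = (if \<exists>n. walk E n u v then enat (LEAST n. walk E n u v) else \<infinity>)"

definition distance_labeling ::
  "'a set \<Rightarrow> ('a \<Rightarrow> 'a \<Rightarrow> bool) \<Rightarrow> nat set \<Rightarrow> ('a \<Rightarrow> nat) \<Rightarrow> bool" where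
  "distance_labeling V E J f \<longleftrightarrow> f ` V = J \<and>
     (\<forall>u\<in>V. \<forall>v\<in>V. \<forall>k. u \<noteq> v \<and> f u = k \<and> f v = k \<longrightarrow> gdist E u v = enat k)"

definition proper_distance_labeling ::
  "'a set \<Rightarrow> ('a \<Rightarrow> 'a \<Rightarrow> bool) \<Rightarrow> nat set \<Rightarrow> ('a \<Rightarrow> nat) \<Rightarrow> bool" where
  "proper_distance_labeling V E J f \<longleftrightarrow> distance_labeling V E J f \<and>
     (\<forall>k\<in>J - {0}. \<exists>u\<in>V. \<exists>v\<in>V. u \<noteq> v \<and> f u = k \<and> f v = k)"

text \<open>Vertices are taken from nat: every finite graph is isomorphic to one on nat.\<close>
definition delta_set :: "nat set \<Rightarrow> bool" where
  "delta_set \<Sigma> \<longleftrightarrow> finite \<Sigma> \<and> \<Sigma> \<noteq> {} \<and>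
     (\<exists>(V::nat set) E f. simple_graph V E \<and> proper_distance_labeling V E \<Sigma> f)"

end

theory Submission
  imports Defs
begin

text \<open>Two vertices labelled \<open>s = Max \<Sigma>\<close> are at distance \<open>s\<close>, so a shortest walk between
  them visits \<open>s + 1\<close> vertices, any two of which are at distance equal to the difference of
  their positions. Two vertices with the same label \<open>k\<close> are at distance \<open>k\<close>, so along this
  geodesic each label occurs at most twice (at positions \<open>a\<close> and \<open>a + k\<close>). Hence
  \<open>s + 1 \<le> 2 |\<Sigma>|\<close>.\<close>

lemma walk_iff_path:
  "walk E n u v \<longleftrightarrow> (\<exists>p. p 0 = u \<and> p n = v \<and> (\<forall>i<n. E (p i) (p (Suc i))))"
proof (induction n arbitrary: u)
  case 0
  then show ?case by auto
next
  case (Suc n)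
  show ?case
  proof
    assume "walk E (Suc n) u v"
    then obtain w p where w: "E u w" and p: "p 0 = w" "p n = v" "\<forall>i<n. E (p i) (p (Suc i))"
      using Suc.IH by auto
    define q where "q i = (if i = 0 then u else p (i - 1))" for i
    have "q 0 = u" "q (Suc n) = v"
      using p by (simp_all add: q_def)
    moreover have "E (q i) (q (Suc i))" if "i < Suc n" for i
      using that w p by (cases i) (simp_all add: q_def)
    ultimately show "\<exists>p. p 0 = u \<and> p (Suc n) = v \<and> (\<forall>i<Suc n. E (p i) (p (Suc i)))"
      by blast
  next
    assume "\<exists>p. p 0 = u \<and> p (Suc n) = v \<and> (\<forall>i<Suc n. E (p i) (p (Suc i)))"
    then obtain p where p: "p 0 = u" "p (Suc n) = v" "\<forall>i<Suc n. E (p i) (p (Suc i))"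
      by blast
    have "walk E n (p 1) v"
      using p by (intro iffD2[OF Suc.IH] exI[of _ "\<lambda>i. p (Suc i)"]) auto
    then show "walk E (Suc n) u v"
      using p by auto
  qed
qed

lemma walk_append: "walk E a x y \<Longrightarrow> walk E b y z \<Longrightarrow> walk E (a + b) x z"
  by (induction a arbitrary: x) auto

lemma walk_segment:
  assumes "\<forall>i<n. E (p i) (p (Suc i))" "i \<le> j" "j \<le> n"
  shows "walk E (j - i) (p i) (p j)"
  unfolding walk_iff_path by (rule exI[of _ "\<lambda>t. p (i + t)"]) (use assms in auto)

lemma walk_gdist: "gdist E x y = enat m \<Longrightarrow> walk E m x y"
  unfolding gdist_def by (auto split: if_splits intro: LeastI)

lemma gdist_le_walk: "walk E n x y \<Longrightarrow> \<exists>m\<le>n. gdist E x y = enat m"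
  unfolding gdist_def by (auto intro: Least_le)

lemma gdist_le_walk_length: "gdist E x y = enat m \<Longrightarrow> walk E n x y \<Longrightarrow> m \<le> n"
  unfolding gdist_def by (auto split: if_splits intro: Least_le)

lemma gdist_self: "gdist E x x = 0"
  using gdist_le_walk[of E 0 x x] by (auto simp: zero_enat_def)

lemma distance_labeling_gdist:
  "distance_labeling V E J f \<Longrightarrow> u \<in> V \<Longrightarrow> v \<in> V \<Longrightarrow> u \<noteq> v \<Longrightarrow> f u = f v
    \<Longrightarrow> gdist E u v = enat (f u)"
  unfolding distance_labeling_def by (metis (no_types))

lemma distance_labeling_label_in: "distance_labeling V E J f \<Longrightarrow> u \<in> V \<Longrightarrow> f u \<in> J"
  unfolding distance_labeling_def by blast

lemma path_in_vertices:
  assumes "simple_graph V E" "\<forall>i<n. E (p i) (p (Suc i))" "p n \<in> V" "i \<le> n"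
  shows "p i \<in> V"
  using assms unfolding simple_graph_def by (cases "i < n") auto

lemma gdist_along_shortest_path:
  assumes path: "\<forall>i<n. E (p i) (p (Suc i))" and shortest: "gdist E (p 0) (p n) = enat n"
    and "i \<le> j" "j \<le> n"
  shows "gdist E (p i) (p j) = enat (j - i)"
proof -
  obtain m where m: "m \<le> j - i" "gdist E (p i) (p j) = enat m"
    using gdist_le_walk[OF walk_segment[of n E p i j, OF path]] assms by blast
  have "walk E i (p 0) (p i)" and tail: "walk E (n - j) (p j) (p n)"
    using walk_segment[of n E p 0 i, OF path] walk_segment[of n E p j n, OF path] assms
    by simp_all
  then have "walk E (i + m + (n - j)) (p 0) (p n)"
    using walk_append[OF walk_append[OF _ walk_gdist[OF m(2)]] tail] by blast
  then have "n \<le> i + m + (n - j)"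
    using gdist_le_walk_length[OF shortest] by blast
  then show ?thesis
    using m assms by simp
qed

lemma card_le_2_if_equidistant:
  assumes "finite F" "\<And>i j. i \<in> F \<Longrightarrow> j \<in> F \<Longrightarrow> i < j \<Longrightarrow> j = i + (k::nat)"
  shows "card F \<le> 2"
proof (cases "F = {}")
  case False
  have "i \<in> {Min F, Min F + k}" if "i \<in> F" for i
    using assms(2)[of "Min F" i] that Min_in[OF assms(1) False] Min_le[OF assms(1) that]
    by (cases "Min F = i") auto
  then have "F \<subseteq> {Min F, Min F + k}"
    by blast
  then have "card F \<le> card {Min F, Min F + k}"
    by (rule card_mono[rotated]) simp
  also have "\<dots> \<le> 2"
    by (simp add: card_insert_le_m1)
  finally show ?thesis .
qed simp

lemma label_occurs_at_most_twice_on_shortest_path: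
  assumes G: "simple_graph V E" and L: "distance_labeling V E J f"
    and path: "\<forall>i<n. E (p i) (p (Suc i))" and "p n \<in> V"
    and shortest: "gdist E (p 0) (p n) = enat n"
  shows "card {i. i \<le> n \<and> f (p i) = k} \<le> 2"
proof (rule card_le_2_if_equidistant)
  fix i j
  assume "i \<in> {i. i \<le> n \<and> f (p i) = k}" "j \<in> {i. i \<le> n \<and> f (p i) = k}" "i < j"
  then have ij: "i < j" "j \<le> n" "f (p i) = k" "f (p j) = k"
    by auto
  have d: "gdist E (p i) (p j) = enat (j - i)"
    using gdist_along_shortest_path[OF path shortest] ij by simp
  have "p i \<noteq> p j"
  proof
    assume "p i = p j"
    then have "enat (j - i) = 0"
      using d gdist_self[of E "p i"] by simp
    then show False
      using ij by (simp add: zero_enat_def)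
  qed
  moreover have "p i \<in> V" "p j \<in> V"
    using path_in_vertices[OF G path \<open>p n \<in> V\<close>] ij by auto
  ultimately have "gdist E (p i) (p j) = enat k"
    using distance_labeling_gdist[OF L] ij by metis
  then show "j = i + k"
    using d ij by simp
qed simp

lemma distance_labeling_label_bound:
  assumes G: "simple_graph V E" and L: "distance_labeling V E J f" and "finite J"
    and uv: "u \<in> V" "v \<in> V" "u \<noteq> v" "f u = s" "f v = s"
  shows "s + 1 \<le> 2 * card J"
proof -
  have shortest: "gdist E u v = enat s"
    using distance_labeling_gdist[OF L uv(1-3)] uv(4,5) by simp
  then have "walk E s u v"
    by (rule walk_gdist)
  then obtain p where p: "p 0 = u" "p s = v" "\<forall>i<s. E (p i) (p (Suc i))"
    unfolding walk_iff_path by blast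
  with shortest have twice: "card {i. i \<le> s \<and> f (p i) = k} \<le> 2" for k
    using label_occurs_at_most_twice_on_shortest_path[OF G L p(3)] uv by simp
  have "f (p i) \<in> J" if "i \<le> s" for i
    using distance_labeling_label_in[OF L path_in_vertices[OF G p(3)]] p(2) uv that by simp
  then have "{0..s} \<subseteq> (\<Union>k\<in>J. {i. i \<le> s \<and> f (p i) = k})"
    by auto
  then have "card {0..s} \<le> card (\<Union>k\<in>J. {i. i \<le> s \<and> f (p i) = k})"
    by (rule card_mono[rotated]) (simp add: \<open>finite J\<close>)
  also have "\<dots> \<le> (\<Sum>k\<in>J. card {i. i \<le> s \<and> f (p i) = k})"
    by (rule card_UN_le[OF \<open>finite J\<close>])
  also have "\<dots> \<le> (\<Sum>k\<in>J. 2)"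
    by (rule sum_mono) (rule twice)
  finally show ?thesis
    by simp
qed

theorem mainTheorem12:
  assumes "delta_set \<Sigma>"
  shows "int (card \<Sigma>) \<ge> \<lceil>(real (Max \<Sigma>) + 1) / 2\<rceil>"
proof -
  obtain V :: "nat set" and E f where G: "simple_graph V E"
    and L: "proper_distance_labeling V E \<Sigma> f" and fin: "finite \<Sigma>" and ne: "\<Sigma> \<noteq> {}"
    using assms unfolding delta_set_def by blast
  have "Max \<Sigma> + 1 \<le> 2 * card \<Sigma>"
  proof (cases "Max \<Sigma> = 0")
    case True
    then show ?thesis
      using fin ne by (simp add: Suc_leI card_gt_0_iff)
  next
    case False
    then have "Max \<Sigma> \<in> \<Sigma> - {0}"
      using fin ne by simp
    then have "\<exists>u\<in>V. \<exists>v\<in>V. u \<noteq> v \<and> f u = Max \<Sigma> \<and> f v = Max \<Sigma>"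
      using L unfolding proper_distance_labeling_def by blast
    then obtain u v where uv: "u \<in> V" "v \<in> V" "u \<noteq> v" "f u = Max \<Sigma>" "f v = Max \<Sigma>"
      by blast
    have "distance_labeling V E \<Sigma> f"
      using L unfolding proper_distance_labeling_def by blast
    from distance_labeling_label_bound[OF G this fin uv] show ?thesis .
  qed
  then have "real (Max \<Sigma> + 1) \<le> real (2 * card \<Sigma>)"
    by (simp only: of_nat_le_iff)
  then have "\<lceil>(real (Max \<Sigma>) + 1) / 2\<rceil> \<le> \<lceil>real (card \<Sigma>)\<rceil>"
    by (intro ceiling_mono) simp
  then show ?thesis
    by simp
qed

end
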